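(* Let $R$ be a nonempty set of permutations and let $f(x),g(x)$ be formal power series (or polynomials) with $g$ invertible such that $$\sum_{n\ge0}|\mathfrak S_n(1243,2143,R)|x^n=1+x\frac{f(x)}{g(x)}.$$ Then $$\sum_{n\ge0}|\mathfrak S_n(1243,2143,Rn)|x^n=1+x\frac{g(x)}{(1-x)g(x)-xf(x)}.$$
   Context: $\mathfrak S_n(S)$ denotes the permutations of $\{1,\dots,n\}$ avoiding every pattern in $S$ (no subsequence with the same relative order as a pattern). $Rn$ is the set obtained by appending to each $\sigma\in R$ of length $m$ the entry $m+1$. *)

theory Defs
  imports "HOL-Computational_Algebra.Formal_Power_Series"
begin

definition perms :: "nat \<Rightarrow> nat list set" where
  "perms n = {xs. distinct xs \<and> set xs = {1..n}}"

definition is_perm :: "nat list \<Rightarrow> bool" where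
  "is_perm xs \<longleftrightarrow> xs \<in> perms (length xs)"

definition order_iso :: "nat list \<Rightarrow> nat list \<Rightarrow> bool" where
  "order_iso a b \<longleftrightarrow> length a = length b \<and>
     (\<forall>i<length a. \<forall>j<length a. (a ! i < a ! j) = (b ! i < b ! j))"

definition contains :: "nat list \<Rightarrow> nat list \<Rightarrow> bool" where
  "contains \<sigma> p \<longleftrightarrow> (\<exists>I. I \<subseteq> {..<length \<sigma>} \<and> order_iso (nths \<sigma> I) p)"

definition Av :: "nat \<Rightarrow> nat list set \<Rightarrow> nat list set" where
  "Av n S = {\<sigma> \<in> perms n. \<forall>p\<in>S. \<not> contains \<sigma> p}"

definition append_max :: "nat list set \<Rightarrow> nat list set" where
  "append_max R = (\<lambda>\<sigma>. \<sigma> @ [length \<sigma> + 1]) ` R"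

definition Av_gf :: "nat list set \<Rightarrow> 'a::field fps" where
  "Av_gf S = Abs_fps (\<lambda>n. of_nat (card (Av n S)))"

end

theory Submission
  imports Defs "HOL-Library.Sublist"
begin

text \<open>
  Write P = {1243, 2143}, a(n) = |S_n(P, R)|, b(n) = |S_n(P, Rn)|, and split
  \<sigma> \<in> S_N(P, Rn) at its maximum as \<sigma> = \<alpha> N \<beta> with |\<alpha>| = k.
  For k = 0, \<beta> is an arbitrary element of S_(N-1)(P, Rn).
  For k \<ge> 1, an entry of \<beta> above two entries of \<alpha> would form a 1243 or 2143 with N,
  so all entries of \<alpha> except its minimum m lie above all of \<beta>, and m \<beta> is a permutation
  of {1..N-k}; an occurrence of \<tau> in \<alpha> followed by N is an occurrence of \<tau>n.
  Hence \<sigma> \<mapsto> (standardised \<alpha>, m \<beta>) is a bijection onto S_k(P, R) \<times> S_(N-k)(P, Rn), so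
  b(n+1) = b(n) + \<Sum>_(k=1..n) a(k) b(n+1-k), i.e. B = 1 + x / (2 - x - A) for the generating
  functions. Substituting A = 1 + x f / g gives the claim.
\<close>

section \<open>Lists and finite sets of numbers\<close>

lemma nths_inter_lessThan: "nths xs (I \<inter> {..<length xs}) = nths xs I"
  unfolding nths_def
  by (rule arg_cong[where f="map fst"], rule filter_cong) (auto simp: set_zip)

lemma subseq_set_subset: "subseq xs ys \<Longrightarrow> set xs \<subseteq> set ys"
  by (induction rule: list_emb.induct) auto

lemma subseq_filter_if_all: "subseq xs ys \<Longrightarrow> \<forall>x\<in>set xs. P x \<Longrightarrow> subseq xs (filter P ys)"
  using subseq_filter[of xs ys P] by simp

lemma subseq_snoc_append_notin:
  assumes "subseq (xs @ [z]) (ys @ zs)" "z \<notin> set zs"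
  shows "subseq (xs @ [z]) ys"
proof -
  obtain as bs where split: "xs @ [z] = as @ bs" "subseq as ys" "subseq bs zs"
    using assms(1) by (auto elim: subseq_appendE)
  have "bs = []"
  proof (rule ccontr)
    assume "bs \<noteq> []"
    then have "z \<in> set bs" using split(1) by (metis last_appendR last_in_set last_snoc)
    then show False using assms(2) subseq_set_subset[OF split(3)] by blast
  qed
  then show ?thesis using split by simp
qed

lemma subseq_snoc_snocD:
  assumes "subseq (xs @ [x]) (ys @ [y])"
  shows "subseq xs ys"
proof (cases "x = y")
  case True
  then show ?thesis using assms by simp
next
  case False
  then have "subseq (xs @ [x]) ys" using subseq_snoc_append_notin[OF assms] by simp
  moreover have "subseq xs (xs @ [x])" by (simp add: subseq_rev_drop_many)
  ultimately show ?thesis using subseq_order.order_trans by blast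
qed

lemma subseq_pair_if_mem:
  "x \<in> set xs \<Longrightarrow> y \<in> set xs \<Longrightarrow> x \<noteq> y \<Longrightarrow> subseq [x, y] xs \<or> subseq [y, x] xs"
  by (induction xs) (auto simp: subseq_singleton_left)

lemma filter_eq_singleton:
  "distinct xs \<Longrightarrow> x \<in> set xs \<Longrightarrow> (\<And>y. y \<in> set xs \<Longrightarrow> P y \<longleftrightarrow> y = x) \<Longrightarrow> filter P xs = [x]"
  by (induction xs) (auto intro: filter_False)

lemma lower_part_eq_atLeastAtMost:
  fixes L U :: "nat set"
  assumes cover: "L \<union> U = {1..N}" and below: "\<And>l u. l \<in> L \<Longrightarrow> u \<in> U \<Longrightarrow> l < u"
  shows "L = {1..card L}"
proof -
  have fin: "finite L" using cover by (metis finite_Un finite_atLeastAtMost)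
  have "L \<subseteq> {1..card L}"
  proof
    fix l assume "l \<in> L"
    then have "l \<in> {1..N}" using cover by blast
    have "{1..l} \<subseteq> L"
    proof
      fix x assume "x \<in> {1..l}"
      with \<open>l \<in> {1..N}\<close> have "x \<in> L \<union> U" using cover by auto
      then show "x \<in> L" using below[OF \<open>l \<in> L\<close>] \<open>x \<in> {1..l}\<close> by fastforce
    qed
    then have "l \<le> card L" using card_mono[OF fin] by (metis card_atLeastAtMost diff_Suc_1)
    with \<open>l \<in> {1..N}\<close> show "l \<in> {1..card L}" by simp
  qed
  then show ?thesis using card_subset_eq[of "{1..card L}" L] by simp
qed

section \<open>Permutations and pattern avoidance\<close>

lemma perms_length: "xs \<in> perms n \<Longrightarrow> length xs = n"
  using distinct_card[of xs] by (simp add: perms_def)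

lemma distinct_in_perms:
  assumes "distinct xs" "set xs \<subseteq> {1..n}" "length xs = n"
  shows "xs \<in> perms n"
  using assms card_subset_eq[of "{1..n}" "set xs"] by (simp add: perms_def distinct_card)

lemma finite_perms: "finite (perms n)"
proof (rule finite_subset)
  show "perms n \<subseteq> {xs. set xs \<subseteq> {1..n} \<and> length xs = n}"
    using perms_length by (auto simp: perms_def)
qed (rule finite_lists_length_eq, simp)

lemma Cons_max_in_perms_iff: "Suc n # xs \<in> perms (Suc n) \<longleftrightarrow> xs \<in> perms n"
proof
  assume "Suc n # xs \<in> perms (Suc n)"
  then have "distinct xs" "Suc n \<notin> set xs" "insert (Suc n) (set xs) = insert (Suc n) {1..n}"
    by (simp_all add: perms_def atLeastAtMostSuc_conv)
  then show "xs \<in> perms n" by (simp add: perms_def insert_ident)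
qed (simp add: perms_def atLeastAtMostSuc_conv)

lemma contains_iff_subseq: "contains \<sigma> p \<longleftrightarrow> (\<exists>q. subseq q \<sigma> \<and> order_iso q p)"
  unfolding contains_def subseq_conv_nths
  by (metis inf_le2 nths_inter_lessThan)

lemma order_iso_map_strict_mono:
  fixes \<phi> :: "nat \<Rightarrow> nat"
  assumes "strict_mono_on (set q) \<phi>"
  shows "order_iso (map \<phi> q) p \<longleftrightarrow> order_iso q p"
  using strict_mono_on_less[OF assms] by (simp add: order_iso_def)

lemma contains_map_strict_mono:
  fixes \<phi> :: "nat \<Rightarrow> nat"
  assumes "strict_mono_on (set \<sigma>) \<phi>"
  shows "contains (map \<phi> \<sigma>) p \<longleftrightarrow> contains \<sigma> p"
proof -
  have "strict_mono_on (set (nths \<sigma> I)) \<phi>" for I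
    using assms set_nths_subset by (rule monotone_on_subset)
  then show ?thesis by (simp add: contains_def nths_map order_iso_map_strict_mono)
qed

lemma contains_Nil_iff: "contains [] p \<longleftrightarrow> p = []"
  by (auto simp: contains_def order_iso_def)

definition avoids :: "nat list \<Rightarrow> nat list set \<Rightarrow> bool" where
  "avoids \<sigma> S \<longleftrightarrow> (\<forall>p\<in>S. \<not> contains \<sigma> p)"

lemma Av_eq: "Av n S = {\<sigma> \<in> perms n. avoids \<sigma> S}"
  by (simp add: Av_def avoids_def)

lemma avoids_Un: "avoids \<sigma> (A \<union> B) \<longleftrightarrow> avoids \<sigma> A \<and> avoids \<sigma> B"
  by (auto simp: avoids_def)

lemma avoids_subseq: "subseq \<sigma> \<tau> \<Longrightarrow> avoids \<tau> S \<Longrightarrow> avoids \<sigma> S"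
  unfolding avoids_def contains_iff_subseq using subseq_order.order_trans by blast

lemma avoids_map_strict_mono:
  fixes \<phi> :: "nat \<Rightarrow> nat"
  shows "strict_mono_on (set \<sigma>) \<phi> \<Longrightarrow> avoids (map \<phi> \<sigma>) S \<longleftrightarrow> avoids \<sigma> S"
  by (simp add: avoids_def contains_map_strict_mono)

lemma avoids_Nil_iff: "avoids [] S \<longleftrightarrow> [] \<notin> S"
  by (auto simp: avoids_def contains_Nil_iff)

lemma Av_0: "Av 0 S = (if [] \<in> S then {} else {[]})"
  by (auto simp: Av_eq perms_def avoids_Nil_iff)

lemma finite_Av: "finite (Av n S)"
  using finite_perms by (rule finite_subset[rotated]) (auto simp: Av_def)

section \<open>The patterns 1243 and 2143\<close>

abbreviation pat_1243_2143 :: "nat list set" where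
  "pat_1243_2143 \<equiv> {[1,2,4,3], [2,1,4,3]}"

definition pair_below_descent :: "nat list \<Rightarrow> bool" where
  "pair_below_descent \<sigma> \<longleftrightarrow>
     (\<exists>w x y z. subseq [w, x, y, z] \<sigma> \<and> w \<noteq> x \<and> w < z \<and> x < z \<and> z < y)"

lemma order_iso_1243: "order_iso [w, x, y, z] [1,2,4,3] \<longleftrightarrow> w < x \<and> x < z \<and> z < y"
  unfolding order_iso_def by (simp add: All_less_Suc2) linarith

lemma order_iso_2143: "order_iso [w, x, y, z] [2,1,4,3] \<longleftrightarrow> x < w \<and> w < z \<and> z < y"
  unfolding order_iso_def by (simp add: All_less_Suc2) linarith

lemma contains_length_4_iff:
  assumes "length p = 4"
  shows "contains \<sigma> p \<longleftrightarrow> (\<exists>w x y z. subseq [w, x, y, z] \<sigma> \<and> order_iso [w, x, y, z] p)"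
proof -
  have "length q = 4 \<longleftrightarrow> (\<exists>w x y z. q = [w, x, y, z])" for q :: "nat list"
    by (auto simp: length_Suc_conv numeral_eq_Suc)
  then show ?thesis
    using assms unfolding contains_iff_subseq order_iso_def by metis
qed

lemma avoids_1243_2143_iff: "avoids \<sigma> pat_1243_2143 \<longleftrightarrow> \<not> pair_below_descent \<sigma>"
proof -
  have c1: "contains \<sigma> [1,2,4,3] \<longleftrightarrow> (\<exists>w x y z. subseq [w, x, y, z] \<sigma> \<and> w < x \<and> x < z \<and> z < y)"
    by (subst contains_length_4_iff) (simp_all only: order_iso_1243, simp)
  have c2: "contains \<sigma> [2,1,4,3] \<longleftrightarrow> (\<exists>w x y z. subseq [w, x, y, z] \<sigma> \<and> x < w \<and> w < z \<and> z < y)"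
    by (subst contains_length_4_iff) (simp_all only: order_iso_2143, simp)
  have "pair_below_descent \<sigma> \<longleftrightarrow> contains \<sigma> [1,2,4,3] \<or> contains \<sigma> [2,1,4,3]"
    unfolding c1 c2 pair_below_descent_def
  proof (intro iffI)
    assume "\<exists>w x y z. subseq [w, x, y, z] \<sigma> \<and> w \<noteq> x \<and> w < z \<and> x < z \<and> z < y"
    then obtain w x y z where "subseq [w, x, y, z] \<sigma>" "w \<noteq> x" "w < z" "x < z" "z < y"
      by blast
    then show "(\<exists>w x y z. subseq [w, x, y, z] \<sigma> \<and> w < x \<and> x < z \<and> z < y) \<or>
      (\<exists>w x y z. subseq [w, x, y, z] \<sigma> \<and> x < w \<and> w < z \<and> z < y)"
      by (cases "w < x") (blast, metis neq_iff)
  qed (metis less_trans less_irrefl)+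
  then show ?thesis by (simp add: avoids_def)
qed

section \<open>Patterns with an appended maximum\<close>

lemma order_iso_snoc_iff:
  "order_iso (q @ [v]) (\<tau> @ [t]) \<longleftrightarrow>
     order_iso q \<tau> \<and> (\<forall>i<length q. (q ! i < v \<longleftrightarrow> \<tau> ! i < t) \<and> (v < q ! i \<longleftrightarrow> t < \<tau> ! i))"
  by (auto simp: order_iso_def All_less_Suc nth_append)

lemma order_iso_snoc_max_iff:
  assumes "\<forall>x\<in>set \<tau>. x < t"
  shows "order_iso (q @ [v]) (\<tau> @ [t]) \<longleftrightarrow> order_iso q \<tau> \<and> (\<forall>x\<in>set q. x < v)"
proof -
  have "\<forall>i<length \<tau>. \<tau> ! i < t" using assms by (simp add: all_set_conv_all_nth)
  then show ?thesis unfolding order_iso_snoc_iff all_set_conv_all_nth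
    by (auto simp: order_iso_def dest: order.asym)
qed

lemma avoids_append_max_iff:
  assumes perm: "\<forall>\<tau>\<in>R. is_perm \<tau>"
  shows "avoids \<sigma> (append_max R) \<longleftrightarrow>
           (\<forall>q v. subseq (q @ [v]) \<sigma> \<longrightarrow> (\<forall>x\<in>set q. x < v) \<longrightarrow> avoids q R)"
proof -
  have bound: "\<forall>x\<in>set \<tau>. x < length \<tau> + 1" if "\<tau> \<in> R" for \<tau>
    using perm that by (auto simp: is_perm_def perms_def)
  have "contains \<sigma> (\<tau> @ [length \<tau> + 1]) \<longleftrightarrow>
          (\<exists>q v. subseq (q @ [v]) \<sigma> \<and> (\<forall>x\<in>set q. x < v) \<and> contains q \<tau>)"
    if "\<tau> \<in> R" for \<tau>
  proof
    assume "contains \<sigma> (\<tau> @ [length \<tau> + 1])"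
    then obtain q' where q': "subseq q' \<sigma>" "order_iso q' (\<tau> @ [length \<tau> + 1])"
      unfolding contains_iff_subseq by blast
    then have "q' \<noteq> []" by (auto simp: order_iso_def)
    then obtain q v where "q' = q @ [v]" by (metis append_butlast_last_id)
    with q' order_iso_snoc_max_iff[OF bound[OF that]] show "\<exists>q v. subseq (q @ [v]) \<sigma> \<and> (\<forall>x\<in>set q. x < v) \<and> contains q \<tau>"
      by (metis contains_iff_subseq subseq_order.order_refl)
  next
    assume "\<exists>q v. subseq (q @ [v]) \<sigma> \<and> (\<forall>x\<in>set q. x < v) \<and> contains q \<tau>"
    then obtain q v q0 where "subseq (q @ [v]) \<sigma>" "\<forall>x\<in>set q. x < v" "subseq q0 q" "order_iso q0 \<tau>"
      unfolding contains_iff_subseq by blast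
    moreover from this have "subseq (q0 @ [v]) \<sigma>"
      using subseq_append subseq_order.order_trans by blast
    moreover have "set q0 \<subseteq> set q"
      using \<open>subseq q0 q\<close> by (rule subseq_set_subset)
    ultimately show "contains \<sigma> (\<tau> @ [length \<tau> + 1])"
      unfolding contains_iff_subseq using order_iso_snoc_max_iff[OF bound[OF that]] by blast
  qed
  then show ?thesis by (simp add: avoids_def append_max_def) blast
qed

section \<open>Splitting at the maximal entry\<close>

lemma not_pair_below_descent_glue:
  assumes left: "\<not> pair_below_descent \<alpha>"
    and right: "\<not> pair_below_descent (filter (\<lambda>x. x \<le> M) (\<alpha> @ [N] @ \<beta>))"
    and \<alpha>N: "\<forall>x\<in>set \<alpha>. x < N" and \<beta>M: "\<forall>x\<in>set \<beta>. x \<le> M" and "M < N"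
    and one_small: "\<forall>x\<in>set \<alpha>. \<forall>y\<in>set \<alpha>. x \<le> M \<longrightarrow> y \<le> M \<longrightarrow> x = y"
  shows "\<not> pair_below_descent (\<alpha> @ [N] @ \<beta>)"
proof
  assume "pair_below_descent (\<alpha> @ [N] @ \<beta>)"
  then obtain w x y z where occ: "subseq [w, x, y, z] (\<alpha> @ [N] @ \<beta>)"
    and order: "w \<noteq> x" "w < z" "x < z" "z < y"
    unfolding pair_below_descent_def by blast
  have "y \<le> N" using subseq_set_subset[OF occ] \<alpha>N \<beta>M \<open>M < N\<close> by fastforce
  consider "y \<le> M" | "z \<le> M" "M < y" | "M < z" using order by linarith
  then show False
  proof cases
    case 1
    then have "subseq [w, x, y, z] (filter (\<lambda>x. x \<le> M) (\<alpha> @ [N] @ \<beta>))"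
      using order by (intro subseq_filter_if_all[OF occ]) auto
    then show False using right order unfolding pair_below_descent_def by blast
  next
    case 2
    have "subseq ([w, x] @ [y]) [w, x, y, z]" by simp
    then have "subseq ([w, x] @ [y]) ((\<alpha> @ [N]) @ \<beta>)"
      using subseq_order.order_trans[OF _ occ] by simp
    moreover have "y \<notin> set \<beta>" using 2 \<beta>M by auto
    ultimately have "subseq [w, x] \<alpha>"
      by (metis subseq_snoc_append_notin subseq_snoc_snocD)
    then have "w \<in> set \<alpha>" "x \<in> set \<alpha>" using subseq_set_subset by fastforce+
    then show False using one_small order 2 by auto
  next
    case 3
    have "z \<notin> set ([N] @ \<beta>)" using 3 order \<open>y \<le> N\<close> \<beta>M by auto
    then have "subseq ([w, x, y] @ [z]) \<alpha>"
      using subseq_snoc_append_notin[of "[w, x, y]" z \<alpha>] occ by simp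
    then show False using left order unfolding pair_below_descent_def by auto
  qed
qed

lemma avoids_append_max_glue:
  assumes perm: "\<forall>\<tau>\<in>R. is_perm \<tau>" and left: "avoids \<alpha> R"
    and right: "avoids (filter (\<lambda>x. x \<le> M) (\<alpha> @ [N] @ \<beta>)) (append_max R)"
    and \<beta>M: "\<forall>x\<in>set \<beta>. x \<le> M"
  shows "avoids (\<alpha> @ [N] @ \<beta>) (append_max R)"
  unfolding avoids_append_max_iff[OF perm]
proof (intro allI impI)
  fix q v assume occ: "subseq (q @ [v]) (\<alpha> @ [N] @ \<beta>)" and below: "\<forall>x\<in>set q. x < v"
  show "avoids q R"
  proof (cases "v \<le> M")
    case True
    then have "subseq (q @ [v]) (filter (\<lambda>x. x \<le> M) (\<alpha> @ [N] @ \<beta>))"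
      using below by (intro subseq_filter_if_all[OF occ]) auto
    then show ?thesis using right below avoids_append_max_iff[OF perm] by blast
  next
    case False
    then have "subseq (q @ [v]) (\<alpha> @ [N])"
      using \<beta>M subseq_snoc_append_notin[of q v "\<alpha> @ [N]" \<beta>] occ by auto
    then have "subseq q \<alpha>" by (rule subseq_snoc_snocD)
    then show ?thesis using left avoids_subseq by blast
  qed
qed

text \<open>
  Inverse to splitting \<open>\<sigma> = \<alpha> N \<beta>\<close> at its maximum: the head \<open>r\<close> of \<open>\<rho> = r \<beta>\<close> is the
  minimum of \<open>\<alpha>\<close>, and the other entries of \<open>\<alpha>\<close> lie above all of \<open>\<rho>\<close>.
\<close>

definition lift :: "nat \<Rightarrow> nat \<Rightarrow> nat \<Rightarrow> nat" where
  "lift r M j = (if j = 1 then r else M + j - 1)"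

definition unlift :: "nat \<Rightarrow> nat \<Rightarrow> nat" where
  "unlift M v = (if v \<le> M then 1 else v - M + 1)"

fun glue :: "nat list \<times> nat list \<Rightarrow> nat list" where
  "glue (\<alpha>, \<rho>) = map (lift (hd \<rho>) (length \<rho>)) \<alpha> @ [length \<alpha> + length \<rho>] @ tl \<rho>"

definition unglue :: "nat \<Rightarrow> nat list \<Rightarrow> nat list \<times> nat list" where
  "unglue k \<sigma> = (map (unlift (length \<sigma> - k)) (take k \<sigma>), filter (\<lambda>v. v \<le> length \<sigma> - k) \<sigma>)"

lemma strict_mono_on_lift: "r \<le> M \<Longrightarrow> A \<subseteq> {1..} \<Longrightarrow> strict_mono_on A (lift r M)"
  by (rule strict_mono_onI) (auto simp: lift_def)

lemma lift_image: "1 \<le> k \<Longrightarrow> lift r M ` {1..k} = insert r {M + 1..<M + k}"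
proof -
  assume "1 \<le> k"
  then have split: "{1..k} = insert 1 {2..k}" by auto
  have shift: "(\<lambda>j. M + j - 1) ` {2..k} = {M + 1..<M + k}"
  proof
    show "{M + 1..<M + k} \<subseteq> (\<lambda>j. M + j - 1) ` {2..k}"
    proof
      fix v assume "v \<in> {M + 1..<M + k}"
      then show "v \<in> (\<lambda>j. M + j - 1) ` {2..k}" by (intro image_eqI[where x = "v - M + 1"]) auto
    qed
  qed auto
  have "lift r M ` {2..k} = (\<lambda>j. M + j - 1) ` {2..k}"
    by (rule image_cong) (auto simp: lift_def)
  moreover have "lift r M 1 = r" by (simp add: lift_def)
  ultimately show ?thesis by (simp only: split shift image_insert)
qed

lemma unlift_lift: "r \<le> M \<Longrightarrow> 1 \<le> j \<Longrightarrow> unlift M (lift r M j) = j"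
  by (auto simp: lift_def unlift_def)

context
  fixes \<alpha> \<beta> :: "nat list" and k M r :: nat
  assumes \<alpha>: "\<alpha> \<in> perms k" and \<rho>: "r # \<beta> \<in> perms M" and "1 \<le> k"
begin

lemma glue_eq: "glue (\<alpha>, r # \<beta>) = map (lift r M) \<alpha> @ [k + M] @ \<beta>"
  using perms_length[OF \<alpha>] perms_length[OF \<rho>] by simp

lemma glue_values:
  shows "set (map (lift r M) \<alpha>) = insert r {M + 1..<M + k}"
    and "r \<in> {1..M}" and "set \<beta> = {1..M} - {r}" and "distinct \<beta>" and "r \<notin> set \<beta>"
    and "strict_mono_on (set \<alpha>) (lift r M)"
proof -
  show "set (map (lift r M) \<alpha>) = insert r {M + 1..<M + k}"
    using \<alpha> lift_image[OF \<open>1 \<le> k\<close>] by (simp add: perms_def)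
  show "r \<in> {1..M}" "set \<beta> = {1..M} - {r}" "distinct \<beta>" "r \<notin> set \<beta>"
    using \<rho> by (auto simp: perms_def)
  have "set \<alpha> \<subseteq> {1..}" using \<alpha> by (auto simp: perms_def)
  with \<open>r \<in> {1..M}\<close> show "strict_mono_on (set \<alpha>) (lift r M)"
    by (simp add: strict_mono_on_lift)
qed

lemma glue_in_perms: "glue (\<alpha>, r # \<beta>) \<in> perms (k + M)"
proof -
  have "distinct (map (lift r M) \<alpha>)"
    using \<alpha> glue_values(6) strict_mono_on_imp_inj_on by (auto simp: perms_def distinct_map)
  then have "distinct (map (lift r M) \<alpha> @ [k + M] @ \<beta>)"
    using glue_values \<open>1 \<le> k\<close> by auto
  moreover have "set (map (lift r M) \<alpha> @ [k + M] @ \<beta>) \<subseteq> {1..k + M}"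
    using glue_values \<open>1 \<le> k\<close> by auto
  moreover have "length (map (lift r M) \<alpha> @ [k + M] @ \<beta>) = k + M"
    using perms_length[OF \<alpha>] perms_length[OF \<rho>] by simp
  ultimately show ?thesis unfolding glue_eq by (rule distinct_in_perms)
qed

lemma filter_glue: "filter (\<lambda>v. v \<le> M) (glue (\<alpha>, r # \<beta>)) = r # \<beta>"
proof -
  have "lift r M j \<le> M \<longleftrightarrow> j = 1" if "j \<in> set \<alpha>" for j
    using that \<alpha> glue_values(2) by (auto simp: perms_def lift_def)
  then have "filter (\<lambda>j. lift r M j \<le> M) \<alpha> = [1]"
    using \<alpha> \<open>1 \<le> k\<close> by (intro filter_eq_singleton) (auto simp: perms_def)
  then have "filter (\<lambda>v. v \<le> M) (map (lift r M) \<alpha>) = [r]"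
    by (simp add: filter_map o_def lift_def)
  moreover have "filter (\<lambda>v. v \<le> M) \<beta> = \<beta>"
    using glue_values(3) by simp
  ultimately show ?thesis
    unfolding glue_eq using glue_values(2) \<open>1 \<le> k\<close> by simp
qed

lemma unglue_glue: "unglue k (glue (\<alpha>, r # \<beta>)) = (\<alpha>, r # \<beta>)"
proof -
  have "length (glue (\<alpha>, r # \<beta>)) = k + M"
    using glue_in_perms by (rule perms_length)
  moreover have "map (unlift M) (map (lift r M) \<alpha>) = \<alpha>"
    using \<alpha> glue_values(2) by (auto simp: perms_def unlift_lift intro: map_idI)
  moreover have "length \<alpha> = k" using \<alpha> by (rule perms_length)
  ultimately show ?thesis
    using filter_glue unfolding unglue_def glue_eq by simp
qed

lemma glue_avoids:
  assumes perm: "\<forall>\<tau>\<in>R. is_perm \<tau>"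
    and left: "avoids \<alpha> (pat_1243_2143 \<union> R)"
    and right: "avoids (r # \<beta>) (pat_1243_2143 \<union> append_max R)"
  shows "avoids (glue (\<alpha>, r # \<beta>)) (pat_1243_2143 \<union> append_max R)"
proof -
  have left': "avoids (map (lift r M) \<alpha>) (pat_1243_2143 \<union> R)"
    using left avoids_map_strict_mono[OF glue_values(6)] by blast
  have "\<not> pair_below_descent (map (lift r M) \<alpha> @ [k + M] @ \<beta>)"
  proof (rule not_pair_below_descent_glue)
    show "\<not> pair_below_descent (map (lift r M) \<alpha>)"
      using left' unfolding avoids_Un avoids_1243_2143_iff by simp
    show "\<not> pair_below_descent (filter (\<lambda>v. v \<le> M) (map (lift r M) \<alpha> @ [k + M] @ \<beta>))"
      using right filter_glue unfolding glue_eq avoids_Un avoids_1243_2143_iff by simp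
  qed (use glue_values \<open>1 \<le> k\<close> in auto)
  moreover have "avoids (map (lift r M) \<alpha> @ [k + M] @ \<beta>) (append_max R)"
  proof (rule avoids_append_max_glue[OF perm])
    show "avoids (map (lift r M) \<alpha>) R" using left' unfolding avoids_Un by simp
    show "avoids (filter (\<lambda>v. v \<le> M) (map (lift r M) \<alpha> @ [k + M] @ \<beta>)) (append_max R)"
      using right filter_glue unfolding glue_eq avoids_Un by simp
  qed (use glue_values in auto)
  ultimately show ?thesis unfolding glue_eq avoids_Un avoids_1243_2143_iff by simp
qed

end

context
  fixes \<alpha> \<beta> :: "nat list" and N :: nat
  assumes perm: "\<alpha> @ [N] @ \<beta> \<in> perms N" and avoid: "\<not> pair_below_descent (\<alpha> @ [N] @ \<beta>)"
    and "\<alpha> \<noteq> []"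
begin

lemma max_split_below:
  assumes a: "a \<in> set \<alpha>" "a \<noteq> Min (set \<alpha>)" and b: "b \<in> set \<beta>"
  shows "b < a"
proof (rule ccontr)
  define m where "m = Min (set \<alpha>)"
  have m: "m \<in> set \<alpha>" "m < a" using a \<open>\<alpha> \<noteq> []\<close> by (auto simp: m_def order.not_eq_order_implies_strict)
  have dist: "distinct (\<alpha> @ [N] @ \<beta>)" and entries: "set (\<alpha> @ [N] @ \<beta>) = {1..N}"
    using perm by (simp_all add: perms_def)
  assume "\<not> b < a"
  moreover have "a \<noteq> b" using a(1) b dist by auto
  ultimately have "a < b" by simp
  have "b \<in> {1..N}" "b \<noteq> N" using b dist entries by auto
  then have "b < N" by simp
  have "subseq ([N] @ [b]) ([N] @ \<beta>)" using b by (simp add: subseq_singleton_left)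
  then have extend: "subseq (xs @ [N, b]) (\<alpha> @ [N] @ \<beta>)" if "subseq xs \<alpha>" for xs
    using list_emb_append_mono[OF that] by simp
  have "subseq [m, a] \<alpha> \<or> subseq [a, m] \<alpha>"
    using subseq_pair_if_mem[OF m(1) a(1)] a(2) by (auto simp: m_def)
  then have "subseq [m, a, N, b] (\<alpha> @ [N] @ \<beta>) \<or> subseq [a, m, N, b] (\<alpha> @ [N] @ \<beta>)"
    using extend[of "[m, a]"] extend[of "[a, m]"] by auto
  then have "pair_below_descent (\<alpha> @ [N] @ \<beta>)"
    unfolding pair_below_descent_def
    using \<open>m < a\<close> \<open>a < b\<close> \<open>b < N\<close> by (metis less_trans order.strict_implies_not_eq)
  then show False using avoid by blast
qed

lemma max_split_lower_values: "insert (Min (set \<alpha>)) (set \<beta>) = {1..length \<beta> + 1}"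
proof -
  define m where "m = Min (set \<alpha>)"
  have m: "m \<in> set \<alpha>" "\<forall>a\<in>set \<alpha>. m \<le> a" using \<open>\<alpha> \<noteq> []\<close> by (simp_all add: m_def)
  have dist: "distinct (\<alpha> @ [N] @ \<beta>)" and entries: "set (\<alpha> @ [N] @ \<beta>) = {1..N}"
    using perm by (simp_all add: perms_def)
  define L where "L = insert m (set \<beta>)"
  have "L \<union> ((set \<alpha> - {m}) \<union> {N}) = {1..N}" using entries m(1) by (auto simp: L_def)
  moreover have "l < u" if "l \<in> L" "u \<in> (set \<alpha> - {m}) \<union> {N}" for l u
  proof -
    have "l < N" using that(1) m(1) dist entries by (fastforce simp: L_def)
    then show ?thesis
      using that m max_split_below by (auto simp: L_def m_def order.not_eq_order_implies_strict)
  qed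
  ultimately have "L = {1..card L}" by (rule lower_part_eq_atLeastAtMost)
  moreover have "m \<notin> set \<beta>" "distinct \<beta>" using m(1) dist by auto
  ultimately show ?thesis by (simp add: L_def m_def distinct_card)
qed

lemma max_split_facts:
  shows "Min (set \<alpha>) \<in> set \<alpha>" and "distinct \<alpha>" and "distinct \<beta>" and "Min (set \<alpha>) \<notin> set \<beta>"
    and "set \<beta> = {1..length \<beta> + 1} - {Min (set \<alpha>)}" and "Min (set \<alpha>) \<in> {1..length \<beta> + 1}"
    and "N = length \<alpha> + length \<beta> + 1" and "\<forall>a\<in>set \<alpha>. a < N"
    and "\<forall>a\<in>set \<alpha>. a \<noteq> Min (set \<alpha>) \<longrightarrow> length \<beta> + 1 < a"
proof -
  have dist: "distinct (\<alpha> @ [N] @ \<beta>)" and entries: "set (\<alpha> @ [N] @ \<beta>) = {1..N}"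
    using perm by (simp_all add: perms_def)
  show "Min (set \<alpha>) \<in> set \<alpha>" using \<open>\<alpha> \<noteq> []\<close> by simp
  then show "distinct \<alpha>" "distinct \<beta>" "Min (set \<alpha>) \<notin> set \<beta>" using dist by auto
  show "set \<beta> = {1..length \<beta> + 1} - {Min (set \<alpha>)}" "Min (set \<alpha>) \<in> {1..length \<beta> + 1}"
    using max_split_lower_values \<open>Min (set \<alpha>) \<notin> set \<beta>\<close> by auto
  show "N = length \<alpha> + length \<beta> + 1" using perms_length[OF perm] by simp
  show "\<forall>a\<in>set \<alpha>. a < N" using dist entries by fastforce
  have "length \<beta> + 1 < a" if "a \<in> set \<alpha>" "a \<noteq> Min (set \<alpha>)" for a
  proof -
    have "a \<notin> insert (Min (set \<alpha>)) (set \<beta>)" using that dist by auto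
    moreover have "a \<in> {1..N}" using that entries by auto
    ultimately show ?thesis using max_split_lower_values by auto
  qed
  then show "\<forall>a\<in>set \<alpha>. a \<noteq> Min (set \<alpha>) \<longrightarrow> length \<beta> + 1 < a" by blast
qed

lemma strict_mono_on_unlift: "strict_mono_on (set \<alpha>) (unlift (length \<beta> + 1))"
proof (rule strict_mono_onI)
  fix a b assume ab: "a \<in> set \<alpha>" "b \<in> set \<alpha>" "a < b"
  then have "b \<noteq> Min (set \<alpha>)" by (metis Min_le finite_set leD)
  then have "length \<beta> + 1 < b" using max_split_facts(9) ab(2) by blast
  moreover have "a = Min (set \<alpha>) \<or> length \<beta> + 1 < a" using max_split_facts(9) ab(1) by blast
  ultimately show "unlift (length \<beta> + 1) a < unlift (length \<beta> + 1) b"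
    using ab(3) max_split_facts(6) by (auto simp: unlift_def)
qed

lemma unlift_in_perms: "map (unlift (length \<beta> + 1)) \<alpha> \<in> perms (length \<alpha>)"
proof (rule distinct_in_perms)
  show "distinct (map (unlift (length \<beta> + 1)) \<alpha>)"
    using max_split_facts(2) strict_mono_on_imp_inj_on[OF strict_mono_on_unlift]
    by (simp add: distinct_map)
  show "set (map (unlift (length \<beta> + 1)) \<alpha>) \<subseteq> {1..length \<alpha>}"
    using max_split_facts(7,8,9) \<open>\<alpha> \<noteq> []\<close> by (auto simp: unlift_def Suc_le_eq)
qed simp

lemma filter_max_split: "filter (\<lambda>v. v \<le> length \<beta> + 1) (\<alpha> @ [N] @ \<beta>) = Min (set \<alpha>) # \<beta>"
proof -
  have "filter (\<lambda>v. v \<le> length \<beta> + 1) \<alpha> = [Min (set \<alpha>)]"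
    by (intro filter_eq_singleton) (use max_split_facts(1,2,6,9) in auto)
  moreover have "filter (\<lambda>v. v \<le> length \<beta> + 1) \<beta> = \<beta>"
    using max_split_facts(5) by (intro filter_True) auto
  moreover have "\<not> N \<le> length \<beta> + 1" using max_split_facts(7) \<open>\<alpha> \<noteq> []\<close> by simp
  ultimately show ?thesis by simp
qed

lemma Min_Cons_in_perms: "Min (set \<alpha>) # \<beta> \<in> perms (length \<beta> + 1)"
proof -
  have "insert (Min (set \<alpha>)) (set \<beta>) = {1..length \<beta> + 1}"
    using max_split_facts(5,6) by blast
  then show ?thesis using max_split_facts(3,4) by (simp add: perms_def)
qed

lemma unglue_max_split:
  "unglue (length \<alpha>) (\<alpha> @ [N] @ \<beta>) = (map (unlift (length \<beta> + 1)) \<alpha>, Min (set \<alpha>) # \<beta>)"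
  using filter_max_split max_split_facts(7) by (simp add: unglue_def)

lemma glue_unglue_max_split: "glue (unglue (length \<alpha>) (\<alpha> @ [N] @ \<beta>)) = \<alpha> @ [N] @ \<beta>"
proof -
  have "lift (Min (set \<alpha>)) (length \<beta> + 1) (unlift (length \<beta> + 1) a) = a" if "a \<in> set \<alpha>" for a
    using that max_split_facts(6,9) by (cases "a = Min (set \<alpha>)") (auto simp: lift_def unlift_def)
  then show ?thesis
    unfolding unglue_max_split using max_split_facts(7) by (simp add: map_idI)
qed

end

lemma unglue_in_Av:
  assumes perm: "\<forall>\<tau>\<in>R. is_perm \<tau>" and \<sigma>: "\<sigma> \<in> Av N (pat_1243_2143 \<union> append_max R)"
    and "\<sigma> ! k = N" "1 \<le> k" "k < N"
  shows "unglue k \<sigma> \<in> Av k (pat_1243_2143 \<union> R) \<times> Av (N - k) (pat_1243_2143 \<union> append_max R)"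
    and "glue (unglue k \<sigma>) = \<sigma>"
proof -
  define \<alpha> \<beta> where "\<alpha> = take k \<sigma>" and "\<beta> = drop (Suc k) \<sigma>"
  have \<sigma>_perm: "\<sigma> \<in> perms N" and av: "avoids \<sigma> (pat_1243_2143 \<union> append_max R)"
    using \<sigma> by (simp_all add: Av_eq)
  have split: "\<sigma> = \<alpha> @ [N] @ \<beta>" and len: "length \<alpha> = k"
    using id_take_nth_drop[of k \<sigma>] perms_length[OF \<sigma>_perm] \<open>\<sigma> ! k = N\<close> \<open>k < N\<close>
    by (simp_all add: \<alpha>_def \<beta>_def)
  have "\<alpha> \<noteq> []" using len \<open>1 \<le> k\<close> by auto
  have nopat: "\<not> pair_below_descent (\<alpha> @ [N] @ \<beta>)"
    using av split unfolding avoids_Un avoids_1243_2143_iff by simp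
  note split_hyps = \<sigma>_perm[unfolded split] nopat \<open>\<alpha> \<noteq> []\<close>
  note facts = max_split_facts[OF split_hyps]
  have M: "length \<beta> + 1 = N - k" using facts(7) len by simp
  have "subseq (\<alpha> @ [N]) \<sigma>"
    unfolding split using subseq_rev_drop_many[OF subseq_order.order_refl, of "\<alpha> @ [N]" \<beta>] by simp
  then have "avoids \<alpha> R"
    using av facts(8) unfolding avoids_Un avoids_append_max_iff[OF perm] by blast
  moreover have "avoids \<alpha> pat_1243_2143"
    using av avoids_subseq[of \<alpha> \<sigma>] subseq_rev_drop_many[OF subseq_order.order_refl]
    unfolding split avoids_Un by blast
  ultimately have "avoids \<alpha> (pat_1243_2143 \<union> R)" unfolding avoids_Un by blast
  then have "avoids (map (unlift (length \<beta> + 1)) \<alpha>) (pat_1243_2143 \<union> R)"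
    using avoids_map_strict_mono[OF strict_mono_on_unlift[OF split_hyps]]
    by blast
  moreover have "avoids (Min (set \<alpha>) # \<beta>) (pat_1243_2143 \<union> append_max R)"
    using av avoids_subseq[OF subseq_filter_left] filter_max_split[OF split_hyps]
    unfolding split by metis
  ultimately show "unglue k \<sigma> \<in> Av k (pat_1243_2143 \<union> R) \<times> Av (N - k) (pat_1243_2143 \<union> append_max R)"
    using unglue_max_split[OF split_hyps]
      unlift_in_perms[OF split_hyps]
      Min_Cons_in_perms[OF split_hyps]
    unfolding split len M by (simp add: Av_eq)
  show "glue (unglue k \<sigma>) = \<sigma>"
    using glue_unglue_max_split[OF split_hyps]
    unfolding split len .
qed

lemma bij_betw_glue:
  assumes perm: "\<forall>\<tau>\<in>R. is_perm \<tau>" and "1 \<le> k" "k < N"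
  shows "bij_betw glue (Av k (pat_1243_2143 \<union> R) \<times> Av (N - k) (pat_1243_2143 \<union> append_max R))
           {\<sigma> \<in> Av N (pat_1243_2143 \<union> append_max R). \<sigma> ! k = N}"
proof (rule bij_betw_byWitness[where f' = "unglue k"])
  have glued: "glue (\<alpha>, \<rho>) \<in> Av N (pat_1243_2143 \<union> append_max R) \<and> glue (\<alpha>, \<rho>) ! k = N
      \<and> unglue k (glue (\<alpha>, \<rho>)) = (\<alpha>, \<rho>)"
    if \<alpha>: "\<alpha> \<in> Av k (pat_1243_2143 \<union> R)" and \<rho>: "\<rho> \<in> Av (N - k) (pat_1243_2143 \<union> append_max R)"
    for \<alpha> \<rho>
  proof -
    have "\<rho> \<noteq> []" using \<rho> perms_length \<open>k < N\<close> by (fastforce simp: Av_eq)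
    then obtain r \<beta> where \<rho>_eq: "\<rho> = r # \<beta>" by (cases \<rho>) auto
    have \<alpha>_perm: "\<alpha> \<in> perms k" and \<rho>_perm: "r # \<beta> \<in> perms (N - k)"
      using \<alpha> \<rho> by (simp_all add: Av_eq \<rho>_eq)
    have "glue (\<alpha>, r # \<beta>) ! k = N"
      unfolding glue_eq[OF \<alpha>_perm \<rho>_perm \<open>1 \<le> k\<close>]
      using perms_length[OF \<alpha>_perm] \<open>k < N\<close> by (simp add: nth_append)
    then show ?thesis
      using glue_in_perms[OF \<alpha>_perm \<rho>_perm \<open>1 \<le> k\<close>] unglue_glue[OF \<alpha>_perm \<rho>_perm \<open>1 \<le> k\<close>]
        glue_avoids[OF \<alpha>_perm \<rho>_perm \<open>1 \<le> k\<close> perm] \<alpha> \<rho> \<open>k < N\<close>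
      by (simp add: Av_eq \<rho>_eq)
  qed
  then show "\<forall>x\<in>Av k (pat_1243_2143 \<union> R) \<times> Av (N - k) (pat_1243_2143 \<union> append_max R).
      unglue k (glue x) = x"
    and "glue ` (Av k (pat_1243_2143 \<union> R) \<times> Av (N - k) (pat_1243_2143 \<union> append_max R))
      \<subseteq> {\<sigma> \<in> Av N (pat_1243_2143 \<union> append_max R). \<sigma> ! k = N}"
    by auto
  show "\<forall>\<sigma>\<in>{\<sigma> \<in> Av N (pat_1243_2143 \<union> append_max R). \<sigma> ! k = N}. glue (unglue k \<sigma>) = \<sigma>"
    using unglue_in_Av(2)[OF perm _ _ \<open>1 \<le> k\<close> \<open>k < N\<close>] by blast
  show "unglue k ` {\<sigma> \<in> Av N (pat_1243_2143 \<union> append_max R). \<sigma> ! k = N}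
      \<subseteq> Av k (pat_1243_2143 \<union> R) \<times> Av (N - k) (pat_1243_2143 \<union> append_max R)"
    using unglue_in_Av(1)[OF perm _ _ \<open>1 \<le> k\<close> \<open>k < N\<close>] by blast
qed

lemma avoids_Cons_max_iff:
  assumes perm: "\<forall>\<tau>\<in>R. is_perm \<tau>" and "[] \<notin> R" and below: "\<forall>x\<in>set \<beta>. x < N"
  shows "avoids (N # \<beta>) (pat_1243_2143 \<union> append_max R) \<longleftrightarrow>
           avoids \<beta> (pat_1243_2143 \<union> append_max R)"
proof
  assume "avoids (N # \<beta>) (pat_1243_2143 \<union> append_max R)"
  then show "avoids \<beta> (pat_1243_2143 \<union> append_max R)"
    using avoids_subseq[OF subseq_drop_many[OF subseq_order.order_refl, of \<beta> "[N]"]] by simp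
next
  assume av: "avoids \<beta> (pat_1243_2143 \<union> append_max R)"
  have "\<not> pair_below_descent (N # \<beta>)"
  proof
    assume "pair_below_descent (N # \<beta>)"
    then obtain w x y z where occ: "subseq [w, x, y, z] (N # \<beta>)" "w \<noteq> x" "w < z" "x < z" "z < y"
      unfolding pair_below_descent_def by blast
    have "y \<le> N" using subseq_set_subset[OF occ(1)] below by fastforce
    then have "w \<noteq> N" using occ by simp
    then have "subseq [w, x, y, z] \<beta>" using subseq_Cons2_neq[OF occ(1)] by blast
    then show False using av occ unfolding avoids_Un avoids_1243_2143_iff pair_below_descent_def by blast
  qed
  moreover have "avoids (N # \<beta>) (append_max R)"
    unfolding avoids_append_max_iff[OF perm]
  proof (intro allI impI)
    fix q v assume occ: "subseq (q @ [v]) (N # \<beta>)" and less: "\<forall>x\<in>set q. x < v"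
    show "avoids q R"
    proof (cases q)
      case Nil
      then show ?thesis using \<open>[] \<notin> R\<close> by (simp add: avoids_Nil_iff)
    next
      case (Cons w q')
      have "v \<le> N" using subseq_set_subset[OF occ] below by fastforce
      then have "w \<noteq> N" using less Cons by simp
      then have "subseq (q @ [v]) \<beta>" using occ Cons subseq_Cons2_neq by fastforce
      then show ?thesis using av less unfolding avoids_Un avoids_append_max_iff[OF perm] by blast
    qed
  qed
  ultimately show "avoids (N # \<beta>) (pat_1243_2143 \<union> append_max R)"
    unfolding avoids_Un avoids_1243_2143_iff by blast
qed

lemma bij_betw_Cons_max:
  assumes perm: "\<forall>\<tau>\<in>R. is_perm \<tau>" and "[] \<notin> R"
  shows "bij_betw ((#) (Suc n)) (Av n (pat_1243_2143 \<union> append_max R))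
           {\<sigma> \<in> Av (Suc n) (pat_1243_2143 \<union> append_max R). \<sigma> ! 0 = Suc n}"
proof -
  have "Suc n # \<beta> \<in> Av (Suc n) (pat_1243_2143 \<union> append_max R) \<longleftrightarrow>
          \<beta> \<in> Av n (pat_1243_2143 \<union> append_max R)" for \<beta>
  proof (cases "\<beta> \<in> perms n")
    case True
    then have "\<forall>x\<in>set \<beta>. x < Suc n" by (auto simp: perms_def)
    then show ?thesis
      using True avoids_Cons_max_iff[OF perm \<open>[] \<notin> R\<close>] by (simp add: Av_eq Cons_max_in_perms_iff)
  qed (simp add: Av_eq Cons_max_in_perms_iff)
  moreover have "\<sigma> = Suc n # tl \<sigma>" if "\<sigma> \<in> Av (Suc n) S" "\<sigma> ! 0 = Suc n" for \<sigma> S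
    using that perms_length[of \<sigma> "Suc n"] by (cases \<sigma>) (auto simp: Av_eq)
  ultimately show ?thesis
    unfolding bij_betw_def by (auto simp: image_iff) metis
qed

section \<open>Counting and generating functions\<close>

lemma card_Av_sum_position_max:
  "card (Av (Suc n) S) = (\<Sum>k<Suc n. card {\<sigma> \<in> Av (Suc n) S. \<sigma> ! k = Suc n})"
proof -
  have "card (Av (Suc n) S) = card (\<Union>k<Suc n. {\<sigma> \<in> Av (Suc n) S. \<sigma> ! k = Suc n})"
  proof (rule arg_cong[where f = card], intro equalityI subsetI)
    fix \<sigma> assume "\<sigma> \<in> Av (Suc n) S"
    then have "Suc n \<in> set \<sigma>" "length \<sigma> = Suc n" using perms_length by (auto simp: Av_eq perms_def)
    then show "\<sigma> \<in> (\<Union>k<Suc n. {\<sigma> \<in> Av (Suc n) S. \<sigma> ! k = Suc n})"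
      using \<open>\<sigma> \<in> Av (Suc n) S\<close> by (auto simp: in_set_conv_nth)
  qed auto
  also have "\<dots> = (\<Sum>k<Suc n. card {\<sigma> \<in> Av (Suc n) S. \<sigma> ! k = Suc n})"
  proof (rule card_UN_disjoint)
    show "\<forall>k\<in>{..<Suc n}. finite {\<sigma> \<in> Av (Suc n) S. \<sigma> ! k = Suc n}"
      using finite_Av by simp
    have "\<sigma> ! i \<noteq> \<sigma> ! j" if "\<sigma> \<in> Av (Suc n) S" "i < Suc n" "j < Suc n" "i \<noteq> j" for \<sigma> i j
      using that perms_length[of \<sigma> "Suc n"] nth_eq_iff_index_eq[of \<sigma> i j] by (simp add: Av_eq perms_def)
    then show "\<forall>i\<in>{..<Suc n}. \<forall>j\<in>{..<Suc n}. i \<noteq> j \<longrightarrow>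
        {\<sigma> \<in> Av (Suc n) S. \<sigma> ! i = Suc n} \<inter> {\<sigma> \<in> Av (Suc n) S. \<sigma> ! j = Suc n} = {}"
      by fastforce
  qed simp
  finally show ?thesis .
qed

lemma card_Av_append_max_Suc:
  assumes perm: "\<forall>\<tau>\<in>R. is_perm \<tau>" and "[] \<notin> R"
  shows "card (Av (Suc n) (pat_1243_2143 \<union> append_max R)) =
           card (Av n (pat_1243_2143 \<union> append_max R)) +
           (\<Sum>k=1..n. card (Av k (pat_1243_2143 \<union> R)) * card (Av (Suc n - k) (pat_1243_2143 \<union> append_max R)))"
proof -
  let ?S = "\<lambda>k. {\<sigma> \<in> Av (Suc n) (pat_1243_2143 \<union> append_max R). \<sigma> ! k = Suc n}"
  have "card (Av (Suc n) (pat_1243_2143 \<union> append_max R)) = card (?S 0) + (\<Sum>k<n. card (?S (Suc k)))"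
    unfolding card_Av_sum_position_max sum.lessThan_Suc_shift ..
  also have "card (?S 0) = card (Av n (pat_1243_2143 \<union> append_max R))"
    using bij_betw_same_card[OF bij_betw_Cons_max[OF perm \<open>[] \<notin> R\<close>]] by simp
  also have "(\<Sum>k<n. card (?S (Suc k))) = (\<Sum>k=1..n. card (?S k))"
    by (simp add: sum.atLeast1_atMost_eq)
  also have "\<dots> = (\<Sum>k=1..n. card (Av k (pat_1243_2143 \<union> R)) *
      card (Av (Suc n - k) (pat_1243_2143 \<union> append_max R)))"
  proof (rule sum.cong)
    fix k assume "k \<in> {1..n}"
    then show "card (?S k) =
      card (Av k (pat_1243_2143 \<union> R)) * card (Av (Suc n - k) (pat_1243_2143 \<union> append_max R))"
      using bij_betw_same_card[OF bij_betw_glue[OF perm, of k "Suc n"]]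
      by (simp add: card_cartesian_product)
  qed simp
  finally show ?thesis .
qed

unbundle fps_syntax

lemma fps_eq_of_recurrence:
  fixes A B :: "'a::field fps"
  assumes A0: "A $ 0 = 1" and B0: "B $ 0 = 1"
    and rec: "\<And>n. B $ Suc n = B $ n + (\<Sum>i=1..n. A $ i * B $ (Suc n - i))"
  shows "B = 1 + fps_X * inverse (2 - fps_X - A)"
proof -
  define E where "E = fps_shift 1 B"
  have B: "B = 1 + fps_X * E"
    by (rule fps_ext) (simp add: E_def B0)
  have conv: "((A - 1) * E) $ n = (\<Sum>i=1..n. A $ i * B $ (Suc n - i))" for n
  proof -
    have "((A - 1) * E) $ n = (\<Sum>i=0..n. (A - 1) $ i * E $ (n - i))" by (rule fps_mult_nth)
    also have "\<dots> = (\<Sum>i=1..n. (A - 1) $ i * E $ (n - i))"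
      by (simp add: sum.atLeast_Suc_atMost A0)
    also have "\<dots> = (\<Sum>i=1..n. A $ i * B $ (Suc n - i))"
      by (rule sum.cong) (auto simp: E_def Suc_diff_le)
    finally show ?thesis .
  qed
  have "E = 1 + fps_X * E + (A - 1) * E"
  proof (rule fps_ext)
    fix n
    have "E $ n = B $ Suc n" by (simp add: E_def)
    also have "\<dots> = B $ n + ((A - 1) * E) $ n" by (simp only: rec conv)
    also have "B $ n = (1 + fps_X * E) $ n" using B by simp
    finally show "E $ n = (1 + fps_X * E + (A - 1) * E) $ n" by simp
  qed
  then have "(2 - fps_X - A) * E = 1" by (simp add: algebra_simps)
  then have "inverse (2 - fps_X - A) = E" by (rule fps_inverse_unique)
  then show ?thesis using B by simp
qed

theorem mainTheorem6:
  fixes R :: "nat list set" and f g :: "'a::field_char_0 fps"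
  assumes "R \<noteq> {}"
    and "\<forall>\<sigma>\<in>R. is_perm \<sigma>"
    and "fps_nth g 0 \<noteq> 0"
    and "Av_gf ({[1,2,4,3], [2,1,4,3]} \<union> R) = 1 + fps_X * f / g"
  shows "Av_gf ({[1,2,4,3], [2,1,4,3]} \<union> append_max R)
           = 1 + fps_X * g / ((1 - fps_X) * g - fps_X * f)"
proof -
  let ?A = "Av_gf (pat_1243_2143 \<union> R) :: 'a fps"
  let ?B = "Av_gf (pat_1243_2143 \<union> append_max R) :: 'a fps"
  have A0: "?A $ 0 = 1" using assms(3,4) by (simp add: fps_divide_unit)
  then have "[] \<notin> R" by (auto simp: Av_gf_def Av_0)
  have B0: "?B $ 0 = 1" by (auto simp: Av_gf_def Av_0 append_max_def)
  have rec: "?B $ Suc n = ?B $ n + (\<Sum>i=1..n. ?A $ i * ?B $ (Suc n - i))" for n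
    unfolding Av_gf_def fps_nth_Abs_fps card_Av_append_max_Suc[OF assms(2) \<open>[] \<notin> R\<close>]
    by simp
  have "?B = 1 + fps_X * inverse (2 - fps_X - ?A)"
    using A0 B0 rec by (rule fps_eq_of_recurrence)
  also have "2 - fps_X - ?A = ((1 - fps_X) * g - fps_X * f) * inverse g"
    using assms(3,4) by (simp add: fps_divide_unit algebra_simps inverse_mult_eq_1')
  also have "fps_X * inverse (((1 - fps_X) * g - fps_X * f) * inverse g)
      = fps_X * g / ((1 - fps_X) * g - fps_X * f)"
    using assms(3) by (simp add: fps_inverse_mult fps_divide_unit)
  finally show ?thesis .
qed

end
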